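(* Let $\delta_i>0$, $L_{17}>0$, and for $\theta_i,\theta_{i-1}\in\mathbb{R}^n$ let $\dot\theta_i=(\theta_i-\theta_{i-1})/\delta_i$. Define $$P_6(x,L_{17})=\begin{cases}1& x<L_{17}/2\\ -3(L_{17}/x)^5+23(L_{17}/x)^4-68(L_{17}/x)^3+96(L_{17}/x)^2-64(L_{17}/x)+17 & L_{17}/2\le x<L_{17}\\ L_{17}/x&\text{otherwise}\end{cases}$$ and $\dot{\bar\theta}_i=\dot\theta_iP_6(\|\dot\theta_i\|,L_{17})$. Let $f_i^d=-c(\theta_i)\,T(\theta_i)\dot\theta_i/\sqrt{\|T(\theta_i)\dot\theta_i\|^2+\epsilon_r}$ be the smoothed Coulomb friction force and $f_i^{d\star}=-c(\theta_i)\,T(\theta_i)\dot{\bar\theta}_i/\sqrt{\|T(\theta_i)\dot{\bar\theta}_i\|^2+\epsilon_r}$ its velocity-limited version. Then: (i) $\dot{\bar\theta}_i$ is twice differentiable in $(\theta_i,\theta_{i-1})$ with locally Lipschitz second derivatives; (ii) $\|\dot{\bar\theta}_i\|\le L_{17}$; (iii) $\dot{\bar\theta}_i=\dot\theta_i$ and $f_i^d=f_i^{d\star}$ whenever $\|\dot\theta_i\|\le L_{17}/2$; (iv) there is a constant $L_{18}$ independent of $L_{17}$ such that $\|\partial\dot{\bar\theta}_i/\partial\theta_i\|\le L_{18}/\delta_i$ and $\|\partial\dot{\bar\theta}_i/\partial\theta_{i-1}\|\le L_{18}/\delta_i$.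
   Context: In the friction model, $\nu>0$ is the friction coefficient, $\epsilon_r>0$ a regularization constant, $A\in\mathbb{R}^{3\times n}$ a constant matrix, $h(\theta_i)=\|A\theta_i\|-\epsilon_r$ the contact distance constraint, $c(\theta_i)=\nu\big[\sqrt{|\partial P_4/\partial x(h(\theta_i),L_2)|^2+\epsilon_r}-\epsilon_r\big]$ with $P_4$ the smooth contact penalty ($P_4(x,L_2)=0$ for $x>1/L_2$, $L_2(1-L_2x)^3$ for $2/(3L_2)<x\le1/L_2$, $-1296L_2^6x^5+3249L_2^5x^4-3137L_2^4x^3+1451L_2^3x^2-323L_2^2x+779L_2/27$ for $1/(3L_2)<x\le2/(3L_2)$, $L_2$ otherwise), and $T(\theta_i)=I-\frac{\partial h}{\partial(A\theta_i)}\frac{\partial h}{\partial(A\theta_i)}^T$ if $h\ge0$, $T(\theta_i)=I$ otherwise. Matrix norms are operator norms. *)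

theory Defs
  imports "HOL-Analysis.Analysis"
begin

definition P4 :: "real \<Rightarrow> real \<Rightarrow> real" where
  "P4 x L2 =
     (if x > 1 / L2 then 0
      else if 2 / (3 * L2) < x then L2 * (1 - L2 * x) ^ 3
      else if 1 / (3 * L2) < x then
        - 1296 * L2^6 * x^5 + 3249 * L2^5 * x^4 - 3137 * L2^4 * x^3
        + 1451 * L2^3 * x^2 - 323 * L2^2 * x + 779 * L2 / 27
      else L2)"

definition P6 :: "real \<Rightarrow> real \<Rightarrow> real" where
  "P6 x L17 =
     (if x < L17 / 2 then 1
      else if x < L17 then
        (let u = L17 / x in
          - 3 * u^5 + 23 * u^4 - 68 * u^3 + 96 * u^2 - 64 * u + 17)
      else L17 / x)"

definition thdot :: "real \<Rightarrow> real^'n \<Rightarrow> real^'n \<Rightarrow> real^'n" where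
  "thdot \<delta> th thp = (1 / \<delta>) *\<^sub>R (th - thp)"

definition thbar :: "real \<Rightarrow> real \<Rightarrow> real^'n \<Rightarrow> real^'n \<Rightarrow> real^'n" where
  "thbar L17 \<delta> th thp = P6 (norm (thdot \<delta> th thp)) L17 *\<^sub>R thdot \<delta> th thp"

definition hdist :: "real \<Rightarrow> real^'n^3 \<Rightarrow> real^'n \<Rightarrow> real" where
  "hdist er A th = norm (A *v th) - er"

definition cfric :: "real \<Rightarrow> real \<Rightarrow> real \<Rightarrow> real^'n^3 \<Rightarrow> real^'n \<Rightarrow> real" where
  "cfric \<nu> er L2 A th =
     \<nu> * (sqrt ((deriv (\<lambda>x. P4 x L2) (hdist er A th))\<^sup>2 + er) - er)"

text \<open>Tangential projector T(theta); the gradient of h with respect to A theta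
  is (A theta)/|A theta| (well defined when h \<ge> 0 since eps_r > 0).\<close>
definition Tproj :: "real \<Rightarrow> real^'n^3 \<Rightarrow> real^'n \<Rightarrow> real^3^3" where
  "Tproj er A th =
     (if hdist er A th \<ge> 0 then
        (let g = (1 / norm (A *v th)) *\<^sub>R (A *v th) in
           mat 1 - (\<chi> i j. g $ i * g $ j))
      else mat 1)"

text \<open>Smoothed Coulomb friction force, evaluated at a velocity v
  (the contact-space velocity is A v).\<close>
definition ffric :: "real \<Rightarrow> real \<Rightarrow> real \<Rightarrow> real^'n^3 \<Rightarrow> real^'n \<Rightarrow> real^'n \<Rightarrow> real^3" where
  "ffric \<nu> er L2 A th v =
     (let w = Tproj er A th *v (A *v v) in
        (- cfric \<nu> er L2 A th / sqrt ((norm w)\<^sup>2 + er)) *\<^sub>R w)"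

end

theory Submission
  imports Defs
begin

text \<open>
  Write \<open>v\<close> for the finite-difference velocity and \<open>p s = P6 (sqrt s) L\<close>, so that the limited
  velocity is \<open>p (v \<bullet> v) *\<^sub>R v\<close>. In the variable \<open>u = L / sqrt s\<close>, \<open>p\<close> equals \<open>1\<close> for
  \<open>u > 2\<close>, a quintic for \<open>1 \<le> u \<le> 2\<close> and \<open>u\<close> itself for \<open>u < 1\<close>, and the quintic agrees with
  both neighbours up to the second derivative at the breakpoints. So \<open>p\<close> is twice differentiable
  with Lipschitz second derivative on bounded intervals and constant near \<open>0\<close>; hence
  \<open>v \<mapsto> p (v \<bullet> v) *\<^sub>R v\<close> is twice differentiable with locally Lipschitz second derivative, and
  composing with the linear map \<open>(\<theta>, \<theta>') \<mapsto> (\<theta> - \<theta>') / \<delta>\<close> gives (i). Since the quintic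
  lies between \<open>1\<close> and \<open>u\<close>, \<open>p (v \<bullet> v) * norm v \<le> L\<close> (ii), and \<open>p = 1\<close> below \<open>(L/2)\<^sup>2\<close> (iii).
  The derivative \<open>p I + 2 p' v v\<^sup>T\<close> is bounded independently of \<open>L\<close> because \<open>p' s * s\<close> depends
  on \<open>u\<close> only, and the chain rule through \<open>v\<close> contributes the factor \<open>1 / \<delta>\<close> (iv).
\<close>

section \<open>Piecewise derivatives and Lipschitz estimates\<close>

lemma DERIV_if_less_at_breakpoint:
  fixes f g :: "real \<Rightarrow> real"
  assumes "(f has_real_derivative D) (at a)" "(g has_real_derivative D) (at a)" "f a = g a"
  shows "((\<lambda>x. if x < a then f x else g x) has_real_derivative D) (at a)"
proof -
  let ?h = "\<lambda>x. if x < a then f x else g x"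
  have "(?h has_real_derivative D) (at a within {..a})"
    by (rule has_field_derivative_transform_within[OF has_field_derivative_at_within[OF assms(1)]
          zero_less_one]) (use assms(3) in auto)
  moreover have "(?h has_real_derivative D) (at a within {a..})"
    by (rule has_field_derivative_transform_within[OF has_field_derivative_at_within[OF assms(2)]
          zero_less_one]) auto
  moreover have "{..a} \<union> {a..} = (UNIV :: real set)"
    by auto
  ultimately show ?thesis
    unfolding has_field_derivative_def has_derivative_within
    using Lim_within_Un[where s = "{..a}" and t = "{a..}" and x = a] by auto
qed

lemma DERIV_piecewise3:
  fixes f0 f1 f2 f0' f1' f2' :: "real \<Rightarrow> real"
  assumes "c < a" "a < b"
    and f0: "\<And>x. (f0 has_real_derivative f0' x) (at x)"
    and f1: "\<And>x. x > c \<Longrightarrow> (f1 has_real_derivative f1' x) (at x)"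
    and f2: "\<And>x. x > c \<Longrightarrow> (f2 has_real_derivative f2' x) (at x)"
    and "f0 a = f1 a" "f0' a = f1' a" "f1 b = f2 b" "f1' b = f2' b"
  shows "((\<lambda>x. if x < a then f0 x else if x < b then f1 x else f2 x) has_real_derivative
          (if x < a then f0' x else if x < b then f1' x else f2' x)) (at x)"
proof -
  let ?F = "\<lambda>x. if x < a then f0 x else if x < b then f1 x else f2 x"
  consider "x < a" | "x = a" | "a < x" "x < b" | "x = b" | "b < x"
    by linarith
  then show ?thesis
  proof cases
    case 1
    have "(?F has_real_derivative f0' x) (at x)"
      by (rule has_field_derivative_transform_within_open[OF f0, of "{..<a}"]) (use 1 in auto)
    then show ?thesis using 1 by simp
  next
    case 2
    have "((\<lambda>x. if x < a then f0 x else f1 x) has_real_derivative f1' a) (at a)"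
      using DERIV_if_less_at_breakpoint f0[of a] f1[of a] assms by simp
    then have "(?F has_real_derivative f1' a) (at a)"
      by (rule has_field_derivative_transform_within_open[of _ _ _ "{..<b}"]) (use assms in auto)
    then show ?thesis using 2 assms by simp
  next
    case 3
    have "(?F has_real_derivative f1' x) (at x)"
      by (rule has_field_derivative_transform_within_open[OF f1, of _ "{a<..<b}"]) (use 3 assms in auto)
    then show ?thesis using 3 by simp
  next
    case 4
    have "((\<lambda>x. if x < b then f1 x else f2 x) has_real_derivative f2' b) (at b)"
      using DERIV_if_less_at_breakpoint f1[of b] f2[of b] assms by simp
    then have "(?F has_real_derivative f2' b) (at b)"
      by (rule has_field_derivative_transform_within_open[of _ _ _ "{a<..}"]) (use assms in auto)
    then show ?thesis using 4 assms by simp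
  next
    case 5
    have "(?F has_real_derivative f2' x) (at x)"
      by (rule has_field_derivative_transform_within_open[OF f2, of _ "{b<..}"]) (use 5 assms in auto)
    then show ?thesis using 5 assms by simp
  qed
qed

lemma lipschitz_on_real_DERIV_bound:
  fixes F F' :: "real \<Rightarrow> real"
  assumes "convex S"
    and "\<And>x. x \<in> S \<Longrightarrow> (F has_real_derivative F' x) (at x)"
    and "\<And>x. x \<in> S \<Longrightarrow> \<bar>F' x\<bar> \<le> B" and "0 \<le> B"
  shows "B-lipschitz_on S F"
proof (rule bounded_derivative_imp_lipschitz[where f' = "\<lambda>x h. h * F' x"])
  show "(F has_derivative (\<lambda>h. h * F' x)) (at x within S)" if "x \<in> S" for x
    using has_field_derivative_at_within[OF assms(2)[OF that], of S]
    by (simp add: has_field_derivative_def mult.commute[of _ "F' x"])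
  show "onorm (\<lambda>h. h * F' x) \<le> B" if "x \<in> S" for x
    using onorm_scaleR_left[OF bounded_linear_ident, of "F' x"] assms(3)[OF that] by (simp add: onorm_id)
qed (use assms in auto)

lemma lipschitz_on_bounded_image:
  fixes f :: "'a::metric_space \<Rightarrow> 'b::metric_space"
  assumes f: "C-lipschitz_on U f" and U: "bounded U"
  shows "bounded (f ` U)"
proof (cases "U = {}")
  case False
  then obtain x0 where x0: "x0 \<in> U"
    by blast
  from U obtain e where e: "\<And>x. x \<in> U \<Longrightarrow> dist x0 x \<le> e"
    using bounded_any_center[of U x0] by blast
  have "dist (f x0) (f x) \<le> C * e" if "x \<in> U" for x
    using lipschitz_onD[OF f x0 that] mult_left_mono[OF e[OF that] lipschitz_on_nonneg[OF f]]
    by linarith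
  then show ?thesis
    unfolding bounded_def by blast
qed simp

lemma (in bounded_bilinear) lipschitz_on_bounded:
  assumes U: "bounded U" and f: "C1-lipschitz_on U f" and g: "C2-lipschitz_on U g"
  shows "\<exists>C. C-lipschitz_on U (\<lambda>x. prod (f x) (g x))"
proof -
  obtain M1 where M1: "M1 > 0" "\<And>x. x \<in> U \<Longrightarrow> norm (f x) \<le> M1"
    using lipschitz_on_bounded_image[OF f U] by (auto simp: bounded_pos)
  obtain M2 where M2: "M2 > 0" "\<And>x. x \<in> U \<Longrightarrow> norm (g x) \<le> M2"
    using lipschitz_on_bounded_image[OF g U] by (auto simp: bounded_pos)
  obtain K where K: "K > 0" "\<And>a b. norm (prod a b) \<le> norm a * norm b * K"
    using pos_bounded by blast
  have C: "C1 \<ge> 0" "C2 \<ge> 0"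
    using lipschitz_on_nonneg f g by blast+
  have "(K * (C1 * M2 + M1 * C2))-lipschitz_on U (\<lambda>x. prod (f x) (g x))"
  proof (rule lipschitz_onI)
    fix x y assume x: "x \<in> U" and y: "y \<in> U"
    have "norm (prod (f x - f y) (g x)) \<le> norm (f x - f y) * norm (g x) * K"
      by (rule K(2))
    also have "\<dots> \<le> (C1 * dist x y) * M2 * K"
      using lipschitz_onD[OF f x y] M2(2)[OF x] K(1) C
      by (intro mult_right_mono mult_mono) (auto simp: dist_norm)
    finally have left: "norm (prod (f x - f y) (g x)) \<le> (C1 * dist x y) * M2 * K" .
    have "norm (prod (f y) (g x - g y)) \<le> norm (f y) * norm (g x - g y) * K"
      by (rule K(2))
    also have "\<dots> \<le> M1 * (C2 * dist x y) * K"
      using lipschitz_onD[OF g x y] M1(2)[OF y] K(1) M1(1)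
      by (intro mult_right_mono mult_mono) (auto simp: dist_norm)
    finally have right: "norm (prod (f y) (g x - g y)) \<le> M1 * (C2 * dist x y) * K" .
    have "dist (prod (f x) (g x)) (prod (f y) (g y))
        = norm (prod (f x - f y) (g x) + prod (f y) (g x - g y))"
      by (simp add: dist_norm diff_left diff_right)
    also have "\<dots> \<le> K * (C1 * M2 + M1 * C2) * dist x y"
      using norm_triangle_ineq[of "prod (f x - f y) (g x)" "prod (f y) (g x - g y)"] left right
      by (simp add: algebra_simps)
    finally show "dist (prod (f x) (g x)) (prod (f y) (g y)) \<le> K * (C1 * M2 + M1 * C2) * dist x y" .
  qed (use K M1 M2 C in simp)
  then show ?thesis ..
qed

definition C21_loc :: "('a::real_normed_vector \<Rightarrow> 'b::real_normed_vector) \<Rightarrow> bool" where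
  "C21_loc f \<longleftrightarrow> (\<exists>D1 D2.
     (\<forall>p. (f has_derivative blinfun_apply (D1 p)) (at p)) \<and>
     (\<forall>p. (D1 has_derivative blinfun_apply (D2 p)) (at p)) \<and>
     (\<forall>p. \<exists>U. open U \<and> p \<in> U \<and> (\<exists>C. C-lipschitz_on U D2)))"

lemma C21_loc_compose_blinfun:
  fixes V :: "'a::real_normed_vector \<Rightarrow>\<^sub>L 'b::real_normed_vector"
    and f :: "'b \<Rightarrow> 'c::real_normed_vector"
  assumes "C21_loc f"
  shows "C21_loc (\<lambda>x. f (V x))"
proof -
  obtain D1 D2 where
    D1: "\<And>y. (f has_derivative blinfun_apply (D1 y)) (at y)" and
    D2: "\<And>y. (D1 has_derivative blinfun_apply (D2 y)) (at y)" and
    lip: "\<And>y. \<exists>U. open U \<and> y \<in> U \<and> (\<exists>C. C-lipschitz_on U D2)"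
    using assms unfolding C21_loc_def by blast
  define pull :: "('b \<Rightarrow>\<^sub>L 'b \<Rightarrow>\<^sub>L 'c) \<Rightarrow> 'a \<Rightarrow>\<^sub>L 'a \<Rightarrow>\<^sub>L 'c" where
    "pull B = bounded_bilinear.prod_left blinfun_compose V o\<^sub>L (B o\<^sub>L V)" for B
  have pull_apply: "blinfun_apply (pull B) k = B (V k) o\<^sub>L V" for B k
    by (simp add: pull_def bounded_bilinear.prod_left.rep_eq[OF bounded_bilinear_blinfun_compose])
  have "bounded_linear pull"
    unfolding pull_def
    by (intro bounded_linear_compose[OF bounded_bilinear.bounded_linear_right
          bounded_bilinear.bounded_linear_left] bounded_bilinear_blinfun_compose)
  then obtain Cp where Cp: "Cp-lipschitz_on UNIV pull"
    by (rule bounded_linear.lipschitz_boundE)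
  obtain CV where CV: "CV-lipschitz_on UNIV (blinfun_apply V)"
    by (rule bounded_linear.lipschitz_boundE[OF blinfun.bounded_linear_right])
  have V: "(blinfun_apply V has_derivative blinfun_apply V) (at x)" for x
    by (rule bounded_linear_imp_has_derivative[OF blinfun.bounded_linear_right])
  have "((\<lambda>x. f (V x)) has_derivative blinfun_apply (D1 (V x) o\<^sub>L V)) (at x)" for x
    by (rule has_derivative_eq_rhs[OF has_derivative_compose[OF V D1]]) (simp add: fun_eq_iff)
  moreover have "((\<lambda>x. D1 (V x) o\<^sub>L V) has_derivative blinfun_apply (pull (D2 (V x)))) (at x)" for x
    by (rule has_derivative_eq_rhs[OF bounded_bilinear.FDERIV[OF bounded_bilinear_blinfun_compose
          has_derivative_compose[OF V D2] has_derivative_const]])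
      (simp add: fun_eq_iff pull_apply)
  moreover have "\<exists>U. open U \<and> x \<in> U \<and> (\<exists>C. C-lipschitz_on U (\<lambda>x. pull (D2 (V x))))" for x
  proof -
    obtain U C where U: "open U" "V x \<in> U" and C: "C-lipschitz_on U D2"
      using lip by blast
    have "(Cp * (C * CV))-lipschitz_on (V -` U) (\<lambda>x. pull (D2 (V x)))"
      by (intro lipschitz_on_compose2[OF lipschitz_on_compose2] lipschitz_on_subset[OF CV]
          lipschitz_on_subset[OF C] lipschitz_on_subset[OF Cp]) auto
    moreover have "open (V -` U)"
      by (rule open_vimage[OF U(1) linear_continuous_on[OF blinfun.bounded_linear_right]])
    ultimately show ?thesis
      using U(2) by blast
  qed
  ultimately show ?thesis
    unfolding C21_loc_def
    by (intro exI[of _ "\<lambda>x. D1 (V x) o\<^sub>L V"] exI[of _ "\<lambda>x. pull (D2 (V x))"]) blast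
qed

definition blinfun_outer :: "'b::real_normed_vector \<Rightarrow> 'a::real_inner \<Rightarrow> 'a \<Rightarrow>\<^sub>L 'b" where
  "blinfun_outer a b = blinfun_scaleR_left a o\<^sub>L blinfun_inner_left b"

lemma blinfun_outer_apply [simp]: "blinfun_apply (blinfun_outer a b) h = (h \<bullet> b) *\<^sub>R a"
  unfolding blinfun_outer_def by (simp add: blinfun_inner_left.rep_eq)

lemma bounded_bilinear_blinfun_outer: "bounded_bilinear blinfun_outer"
  unfolding blinfun_outer_def[abs_def]
  by (rule bounded_bilinear.comp[OF bounded_bilinear_blinfun_compose
        bounded_linear_blinfun_scaleR_left bounded_linear_blinfun_inner_left])

lemmas blinfun_outer_prod_apply [simp] =
  bounded_bilinear.prod_left.rep_eq[OF bounded_bilinear_blinfun_outer]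
  bounded_bilinear.prod_right.rep_eq[OF bounded_bilinear_blinfun_outer]

lemma has_derivative_inner_self:
  "((\<lambda>x. x \<bullet> x) has_derivative (\<lambda>h. 2 * (v \<bullet> h))) (at v within S)"
  by (rule has_derivative_eq_rhs[OF has_derivative_inner[OF has_derivative_ident has_derivative_ident]])
    (simp add: inner_commute[of _ v])

section \<open>The limiter polynomial\<close>

definition P6_poly :: "real \<Rightarrow> real" where
  "P6_poly u = - 3 * u^5 + 23 * u^4 - 68 * u^3 + 96 * u^2 - 64 * u + 17"

definition P6_poly_d1 :: "real \<Rightarrow> real" where
  "P6_poly_d1 u = - 15 * u^4 + 92 * u^3 - 204 * u^2 + 192 * u - 64"

definition P6_poly_d2 :: "real \<Rightarrow> real" where
  "P6_poly_d2 u = - 60 * u^3 + 276 * u^2 - 408 * u + 192"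

definition P6_poly_d3 :: "real \<Rightarrow> real" where
  "P6_poly_d3 u = - 180 * u^2 + 552 * u - 408"

lemma DERIV_P6_poly:
  "(P6_poly has_real_derivative P6_poly_d1 u) (at u)"
  "(P6_poly_d1 has_real_derivative P6_poly_d2 u) (at u)"
  "(P6_poly_d2 has_real_derivative P6_poly_d3 u) (at u)"
  unfolding P6_poly_def P6_poly_d1_def P6_poly_d2_def P6_poly_d3_def
  by (auto intro!: derivative_eq_intros simp: algebra_simps)

text \<open>At \<open>u = 2\<close> the quintic matches the constant \<open>1\<close>, and at \<open>u = 1\<close> the identity, up to second
  order; this is what makes \<open>P6\<close> twice differentiable.\<close>

lemma P6_poly_contact:
  "P6_poly 1 = 1" "P6_poly_d1 1 = 1" "P6_poly_d2 1 = 0"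
  "P6_poly 2 = 1" "P6_poly_d1 2 = 0" "P6_poly_d2 2 = 0"
  by (simp_all add: P6_poly_def P6_poly_d1_def P6_poly_d2_def)

lemma P6_poly_bounds:
  assumes "1 \<le> u" "u \<le> 2"
  shows "1 \<le> P6_poly u" "P6_poly u \<le> u"
proof -
  have "P6_poly u - 1 = (2 - u)^3 * ((3 * u - 2) * (u - 1))"
    unfolding P6_poly_def by algebra
  moreover have "0 \<le> (2 - u)^3 * ((3 * u - 2) * (u - 1))"
    using assms by simp
  ultimately show "1 \<le> P6_poly u" by simp
  have "u - P6_poly u = (u - 1)^3 * (3 * (u - 7/3)^2 + 2/3)"
    unfolding P6_poly_def by algebra
  moreover have "0 \<le> (u - 1)^3 * (3 * (u - 7/3)^2 + 2/3)"
    using assms by simp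
  ultimately show "P6_poly u \<le> u" by simp
qed

lemma P6_eq_P6_poly:
  "P6 x L = (if x < L / 2 then 1 else if x < L then P6_poly (L / x) else L / x)"
  unfolding P6_def P6_poly_def Let_def by simp

lemma P6_bounds:
  assumes "L > 0"
  shows "0 \<le> P6 x L" "P6 x L \<le> 2" "P6 x L * x \<le> L"
proof -
  consider "x < L / 2" | "L / 2 \<le> x" "x < L" | "L \<le> x"
    by linarith
  then have "0 \<le> P6 x L \<and> P6 x L \<le> 2 \<and> P6 x L * x \<le> L"
  proof cases
    case 1
    then show ?thesis
      using assms by (simp add: P6_eq_P6_poly)
  next
    case 2
    then have x: "x > 0" "1 \<le> L / x" "L / x \<le> 2"
      using assms by (auto simp: field_simps)
    have "P6_poly (L / x) * x \<le> L / x * x"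
      by (rule mult_right_mono[OF P6_poly_bounds(2)[OF x(2,3)]]) (use x(1) in simp)
    then show ?thesis
      using 2 x P6_poly_bounds[OF x(2,3)] by (simp add: P6_eq_P6_poly)
  next
    case 3
    then show ?thesis
      using assms by (simp add: P6_eq_P6_poly field_simps)
  qed
  then show "0 \<le> P6 x L" "P6 x L \<le> 2" "P6 x L * x \<le> L"
    by auto
qed

lemma P6_eq_1:
  assumes "L > 0" "x \<le> L / 2"
  shows "P6 x L = 1"
proof (cases "x < L / 2")
  case False
  then have "x = L / 2" "L / x = 2"
    using assms by auto
  then show ?thesis
    using assms by (simp add: P6_eq_P6_poly P6_poly_contact)
qed (simp add: P6_eq_P6_poly)

section \<open>The limiter as a function of the squared speed\<close>

text \<open>For \<open>u = L / sqrt s\<close> the derivative of \<open>s \<mapsto> L / sqrt s\<close> is \<open>rsqrt_deriv L u\<close>;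
  writing all derivatives of \<open>P6 (sqrt s) L\<close> as functions of \<open>u\<close> keeps them polynomial.\<close>

definition rsqrt_deriv :: "real \<Rightarrow> real \<Rightarrow> real" where
  "rsqrt_deriv L u = - (u^3) / (2 * L^2)"

definition rsqrt_deriv_d1 :: "real \<Rightarrow> real \<Rightarrow> real" where
  "rsqrt_deriv_d1 L u = - 3 * u^2 / (2 * L^2)"

definition rsqrt_deriv_d2 :: "real \<Rightarrow> real \<Rightarrow> real" where
  "rsqrt_deriv_d2 L u = - 3 * u / L^2"

lemma DERIV_rsqrt_deriv:
  "(rsqrt_deriv L has_real_derivative rsqrt_deriv_d1 L u) (at u)"
  "(rsqrt_deriv_d1 L has_real_derivative rsqrt_deriv_d2 L u) (at u)"
  unfolding rsqrt_deriv_def rsqrt_deriv_d1_def rsqrt_deriv_d2_def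
  by (auto intro!: DERIV_cdivide[THEN DERIV_cong] derivative_eq_intros)

lemma DERIV_L_div_sqrt:
  assumes "L > 0" "s > 0"
  shows "((\<lambda>s. L / sqrt s) has_real_derivative rsqrt_deriv L (L / sqrt s)) (at s)"
proof -
  have "((\<lambda>s. L / sqrt s) has_real_derivative - L * (inverse (sqrt s) / 2) / (sqrt s)^2) (at s)"
    using assms by (auto intro!: derivative_eq_intros simp: power2_eq_square)
  moreover have "- L * (inverse (sqrt s) / 2) / (sqrt s)^2 = rsqrt_deriv L (L / sqrt s)"
    using assms unfolding rsqrt_deriv_def by (simp add: field_simps power2_eq_square power3_eq_cube)
  ultimately show ?thesis by simp
qed

lemma DERIV_comp_L_div_sqrt:
  assumes "L > 0" "s > 0" "\<And>u. (F has_real_derivative F' u) (at u)"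
  shows "((\<lambda>s. F (L / sqrt s)) has_real_derivative F' (L / sqrt s) * rsqrt_deriv L (L / sqrt s)) (at s)"
  using DERIV_chain2[OF assms(3) DERIV_L_div_sqrt[OF assms(1,2)]] .

lemma rsqrt_deriv_mult_self:
  assumes "L > 0" "s > 0"
  shows "rsqrt_deriv L (L / sqrt s) * s = - (L / sqrt s) / 2"
proof -
  have "s = sqrt s ^ 2" using assms by simp
  then have "rsqrt_deriv L (L / sqrt s) * s = - (L^3) * sqrt s ^ 2 / (2 * L^2 * sqrt s ^ 3)"
    unfolding rsqrt_deriv_def by (simp add: power_divide)
  also have "\<dots> = - (L / sqrt s) / 2"
    using assms by (simp add: field_simps power2_eq_square power3_eq_cube)
  finally show ?thesis .
qed

lemma L_div_sqrt_breakpoints: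
  assumes "L > 0"
  shows "L / sqrt (L^2 / 4) = 2" "L / sqrt (L^2) = 1"
  using assms by (simp_all add: real_sqrt_divide)

lemma L_div_sqrt_range:
  assumes "L > 0"
  shows "L^2 / 4 \<le> s \<Longrightarrow> s \<le> L^2 \<Longrightarrow> L / sqrt s \<in> {1..2}"
    and "L^2 \<le> s \<Longrightarrow> L / sqrt s \<in> {0..1}"
proof -
  assume "L^2 / 4 \<le> s" "s \<le> L^2"
  then have "sqrt (L^2 / 4) \<le> sqrt s" "sqrt s \<le> sqrt (L^2)"
    by (simp_all only: real_sqrt_le_iff)
  then have "L / 2 \<le> sqrt s" "sqrt s \<le> L"
    using assms by (simp_all add: real_sqrt_divide)
  moreover from this have "0 < sqrt s"
    using assms by linarith
  ultimately show "L / sqrt s \<in> {1..2}"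
    by (simp add: pos_le_divide_eq pos_divide_le_eq)
next
  assume "L^2 \<le> s"
  then have "L \<le> sqrt s"
    using assms real_sqrt_le_mono by fastforce
  moreover from this have "0 < sqrt s"
    using assms by linarith
  ultimately show "L / sqrt s \<in> {0..1}"
    using assms by (simp add: pos_divide_le_eq)
qed

text \<open>Using the squared speed avoids the non-differentiable norm at \<open>0\<close>: \<open>P6_sq L\<close> is constant
  near \<open>0\<close>.\<close>

definition P6_sq :: "real \<Rightarrow> real \<Rightarrow> real" where
  "P6_sq L s = P6 (sqrt s) L"

definition P6_sq_d1 :: "real \<Rightarrow> real \<Rightarrow> real" where
  "P6_sq_d1 L s =
     (if s < L^2 / 4 then 0
      else if s < L^2 then P6_poly_d1 (L / sqrt s) * rsqrt_deriv L (L / sqrt s)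
      else rsqrt_deriv L (L / sqrt s))"

definition P6_sq_d2 :: "real \<Rightarrow> real \<Rightarrow> real" where
  "P6_sq_d2 L s =
     (if s < L^2 / 4 then 0
      else if s < L^2 then
        (P6_poly_d2 (L / sqrt s) * rsqrt_deriv L (L / sqrt s)
         + P6_poly_d1 (L / sqrt s) * rsqrt_deriv_d1 L (L / sqrt s)) * rsqrt_deriv L (L / sqrt s)
      else rsqrt_deriv_d1 L (L / sqrt s) * rsqrt_deriv L (L / sqrt s))"

lemma P6_sq_eq:
  assumes "L > 0"
  shows "P6_sq L s =
    (if s < L^2 / 4 then 1 else if s < L^2 then P6_poly (L / sqrt s) else L / sqrt s)"
proof -
  have "sqrt s < y \<longleftrightarrow> s < y^2" if "y > 0" for y
    using that by (metis real_sqrt_less_iff abs_of_pos real_sqrt_abs)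
  from this[of "L / 2"] this[of L] show ?thesis
    using assms unfolding P6_sq_def P6_eq_P6_poly by (simp add: power_divide)
qed

lemma DERIV_P6_sq:
  assumes "L > 0"
  shows "(P6_sq L has_real_derivative P6_sq_d1 L s) (at s)"
proof -
  have "((\<lambda>s. if s < L^2 / 4 then 1 else if s < L^2 then P6_poly (L / sqrt s) else L / sqrt s)
    has_real_derivative P6_sq_d1 L s) (at s)"
    unfolding P6_sq_d1_def
    by (rule DERIV_piecewise3[where c = 0])
      (use assms DERIV_comp_L_div_sqrt[OF assms _ DERIV_P6_poly(1)] DERIV_L_div_sqrt[OF assms] in
        \<open>auto simp: L_div_sqrt_breakpoints P6_poly_contact rsqrt_deriv_def\<close>)
  then show ?thesis
    unfolding P6_sq_eq[OF assms, abs_def] .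
qed

lemma DERIV_P6_sq_d1:
  assumes "L > 0"
  shows "(P6_sq_d1 L has_real_derivative P6_sq_d2 L s) (at s)"
proof -
  have "((\<lambda>u. P6_poly_d1 u * rsqrt_deriv L u) has_real_derivative
      P6_poly_d2 u * rsqrt_deriv L u + P6_poly_d1 u * rsqrt_deriv_d1 L u) (at u)" for u
    by (auto intro!: derivative_eq_intros DERIV_P6_poly DERIV_rsqrt_deriv)
  from DERIV_comp_L_div_sqrt[OF assms _ this] show ?thesis
    unfolding P6_sq_d1_def P6_sq_d2_def
    by (intro DERIV_piecewise3[where c = 0])
      (use assms DERIV_comp_L_div_sqrt[OF assms _ DERIV_rsqrt_deriv(1)] in
        \<open>auto simp: L_div_sqrt_breakpoints P6_poly_contact rsqrt_deriv_def\<close>)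
qed

lemma lipschitz_on_comp_L_div_sqrt:
  assumes "L > 0" "convex S" "S \<subseteq> {0<..}" "\<And>s. s \<in> S \<Longrightarrow> L / sqrt s \<in> {a..b}"
    and "\<And>u. (F has_real_derivative F' u) (at u)" "continuous_on {a..b} F'"
  shows "\<exists>C. C-lipschitz_on S (\<lambda>s. F (L / sqrt s))"
proof -
  have "continuous_on {a..b} (\<lambda>u. F' u * rsqrt_deriv L u)"
    using assms(1,6) unfolding rsqrt_deriv_def by (intro continuous_intros) auto
  then have "bounded ((\<lambda>u. F' u * rsqrt_deriv L u) ` {a..b})"
    by (intro compact_imp_bounded compact_continuous_image compact_Icc)
  then obtain B where B: "B > 0" "\<And>u. u \<in> {a..b} \<Longrightarrow> \<bar>F' u * rsqrt_deriv L u\<bar> \<le> B"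
    by (auto simp: bounded_pos)
  have "B-lipschitz_on S (\<lambda>s. F (L / sqrt s))"
    by (rule lipschitz_on_real_DERIV_bound[OF assms(2) DERIV_comp_L_div_sqrt[OF assms(1) _ assms(5)]])
      (use assms(3,4) B in auto)
  then show ?thesis ..
qed

lemma P6_sq_d2_closed_pieces:
  assumes L: "L > 0"
  shows "s \<le> L^2 / 4 \<Longrightarrow> P6_sq_d2 L s = 0"
    and "L^2 / 4 \<le> s \<Longrightarrow> s \<le> L^2 \<Longrightarrow> P6_sq_d2 L s =
      (P6_poly_d2 (L / sqrt s) * rsqrt_deriv L (L / sqrt s)
       + P6_poly_d1 (L / sqrt s) * rsqrt_deriv_d1 L (L / sqrt s)) * rsqrt_deriv L (L / sqrt s)"
    and "L^2 \<le> s \<Longrightarrow> P6_sq_d2 L s = rsqrt_deriv_d1 L (L / sqrt s) * rsqrt_deriv L (L / sqrt s)"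
proof -
  have "L^2 / 4 < L^2"
    using L by simp
  show "P6_sq_d2 L s = 0" if "s \<le> L^2 / 4"
  proof (cases "s = L^2 / 4")
    case True
    have "L / sqrt s = 2" "s < L^2"
      using \<open>L^2 / 4 < L^2\<close> L_div_sqrt_breakpoints(1)[OF L] unfolding True by simp_all
    then show ?thesis
      by (simp add: P6_sq_d2_def P6_poly_contact)
  qed (use that in \<open>simp add: P6_sq_d2_def\<close>)
  show "P6_sq_d2 L s =
      (P6_poly_d2 (L / sqrt s) * rsqrt_deriv L (L / sqrt s)
       + P6_poly_d1 (L / sqrt s) * rsqrt_deriv_d1 L (L / sqrt s)) * rsqrt_deriv L (L / sqrt s)"
    if "L^2 / 4 \<le> s" "s \<le> L^2"
    using that L_div_sqrt_breakpoints(2)[OF L] \<open>L^2 / 4 < L^2\<close>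
    by (cases "s = L^2") (simp_all add: P6_sq_d2_def P6_poly_contact)
  show "P6_sq_d2 L s = rsqrt_deriv_d1 L (L / sqrt s) * rsqrt_deriv L (L / sqrt s)" if "L^2 \<le> s"
  proof -
    have "\<not> s < L^2 / 4" "\<not> s < L^2"
      using that \<open>L^2 / 4 < L^2\<close> by linarith+
    then show ?thesis
      by (simp add: P6_sq_d2_def)
  qed
qed

lemma P6_sq_d2_lipschitz:
  assumes L: "L > 0"
  shows "\<exists>C. C-lipschitz_on {a..b} (P6_sq_d2 L)"
proof -
  define M where "M u = (P6_poly_d2 u * rsqrt_deriv L u + P6_poly_d1 u * rsqrt_deriv_d1 L u)
    * rsqrt_deriv L u" for u
  define M' where "M' u =
    (P6_poly_d3 u * rsqrt_deriv L u + 2 * P6_poly_d2 u * rsqrt_deriv_d1 L u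
     + P6_poly_d1 u * rsqrt_deriv_d2 L u) * rsqrt_deriv L u
    + (P6_poly_d2 u * rsqrt_deriv L u + P6_poly_d1 u * rsqrt_deriv_d1 L u) * rsqrt_deriv_d1 L u"
    for u
  define T where "T u = rsqrt_deriv_d1 L u * rsqrt_deriv L u" for u
  define T' where "T' u = rsqrt_deriv_d2 L u * rsqrt_deriv L u + rsqrt_deriv_d1 L u ^ 2" for u
  have "(M has_real_derivative M' u) (at u)" "(T has_real_derivative T' u) (at u)" for u
    unfolding M_def M'_def T_def T'_def
    by (auto intro!: derivative_eq_intros DERIV_P6_poly DERIV_rsqrt_deriv
        simp: algebra_simps power2_eq_square)
  moreover have "continuous_on S M'" "continuous_on S T'" for S
    using L unfolding M'_def T'_def P6_poly_d1_def P6_poly_d2_def P6_poly_d3_def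
      rsqrt_deriv_def rsqrt_deriv_d1_def rsqrt_deriv_d2_def
    by (auto intro!: continuous_intros)
  moreover have "{L^2 / 4..L^2} \<subseteq> {0<..}" "{L^2..} \<subseteq> {0<..}"
    using L by (auto intro: less_le_trans[of _ "L^2 / 4"] less_le_trans[of _ "L^2"])
  ultimately obtain C1 C2 where
      C1: "C1-lipschitz_on {L^2 / 4..L^2} (\<lambda>s. M (L / sqrt s))" and
      C2: "C2-lipschitz_on {L^2..} (\<lambda>s. T (L / sqrt s))"
    using lipschitz_on_comp_L_div_sqrt[OF L] L_div_sqrt_range[OF L]
    by (metis atLeastAtMost_iff atLeast_iff convex_real_interval(1,5))
  define C where "C = max C1 C2"
  have "C-lipschitz_on {..L^2 / 4} (P6_sq_d2 L)"
    by (intro lipschitz_on_transform[OF lipschitz_on_mono[OF lipschitz_on_constant[of _ 0]]])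
      (use lipschitz_on_nonneg[OF C1] P6_sq_d2_closed_pieces(1)[OF L] in \<open>auto simp: C_def\<close>)
  moreover have "C-lipschitz_on {L^2 / 4..L^2} (P6_sq_d2 L)"
    by (intro lipschitz_on_transform[OF lipschitz_on_mono[OF C1]])
      (auto simp: C_def M_def P6_sq_d2_closed_pieces(2)[OF L])
  moreover have "C-lipschitz_on {L^2..} (P6_sq_d2 L)"
    by (intro lipschitz_on_transform[OF lipschitz_on_mono[OF C2]])
      (auto simp: C_def T_def P6_sq_d2_closed_pieces(3)[OF L])
  ultimately have "C-lipschitz_on {a..b} (P6_sq_d2 L)"
    by (intro lipschitz_on_closed_Union[where I = "{{..L^2 / 4}, {L^2 / 4..L^2}, {L^2..}}" and U = id])
      (use lipschitz_on_nonneg[OF C1] in \<open>auto simp: C_def\<close>)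
  then show ?thesis ..
qed

lemma P6_sq_d1_lipschitz:
  assumes "L > 0"
  shows "\<exists>C. C-lipschitz_on {a..b} (P6_sq_d1 L)"
proof -
  obtain C where "C-lipschitz_on {a..b} (P6_sq_d2 L)"
    using P6_sq_d2_lipschitz[OF assms] ..
  then have "bounded (P6_sq_d2 L ` {a..b})"
    by (intro compact_imp_bounded compact_continuous_image lipschitz_on_continuous_on compact_Icc)
  then obtain B where "B > 0" "\<And>s. s \<in> {a..b} \<Longrightarrow> \<bar>P6_sq_d2 L s\<bar> \<le> B"
    by (auto simp: bounded_pos)
  then have "B-lipschitz_on {a..b} (P6_sq_d1 L)"
    by (intro lipschitz_on_real_DERIV_bound[OF _ DERIV_P6_sq_d1[OF assms]]) auto
  then show ?thesis ..
qed

lemma P6_sq_d1_mult_self: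
  assumes L: "L > 0"
  shows "P6_sq_d1 L s * s =
    (if s < L^2 / 4 then 0
     else if s < L^2 then - (P6_poly_d1 (L / sqrt s) * (L / sqrt s) / 2)
     else - (L / sqrt s / 2))"
proof (cases "s < L^2 / 4")
  case False
  then have "s > 0"
    using zero_less_power[OF L, of 2] by linarith
  then show ?thesis
    using False rsqrt_deriv_mult_self[OF L \<open>s > 0\<close>] by (simp add: P6_sq_d1_def mult.assoc)
qed (simp add: P6_sq_d1_def)

text \<open>Expressed in \<open>u = L / sqrt s\<close>, \<open>P6_sq_d1 L s * s\<close> does not depend on \<open>L\<close>; this is why the
  constant \<open>L18\<close> is independent of \<open>L17\<close>.\<close>

lemma P6_sq_d1_mult_self_bounded:
  "\<exists>B. \<forall>L > 0. \<forall>s. \<bar>P6_sq_d1 L s * s\<bar> \<le> B"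
proof -
  have "continuous_on {1..2} (\<lambda>u. P6_poly_d1 u * u / 2)"
    unfolding P6_poly_d1_def by (intro continuous_intros) auto
  then have "bounded ((\<lambda>u. P6_poly_d1 u * u / 2) ` {1..2})"
    by (intro compact_imp_bounded compact_continuous_image compact_Icc)
  then obtain B where B: "B > 0" "\<And>u. u \<in> {1..2} \<Longrightarrow> \<bar>P6_poly_d1 u * u / 2\<bar> \<le> B"
    by (auto simp: bounded_pos)
  have "\<bar>P6_sq_d1 L s * s\<bar> \<le> max B (1 / 2)" if L: "L > 0" for L s
  proof -
    consider "s < L^2 / 4" | "L^2 / 4 \<le> s" "s < L^2" | "L^2 \<le> s"
      by linarith
    then show ?thesis
    proof cases
      case 2
      then have "P6_sq_d1 L s * s = - (P6_poly_d1 (L / sqrt s) * (L / sqrt s) / 2)"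
        by (simp add: P6_sq_d1_mult_self[OF L])
      moreover have "L / sqrt s \<in> {1..2}"
        using 2 L_div_sqrt_range(1)[OF L] by simp
      then have "\<bar>P6_poly_d1 (L / sqrt s) * (L / sqrt s) / 2\<bar> \<le> B"
        by (rule B(2))
      ultimately show ?thesis
        by simp
    next
      case 3
      have "L / sqrt s \<in> {0..1}"
        using 3 L_div_sqrt_range(2)[OF L] by simp
      moreover have "\<not> s < L^2 / 4" "\<not> s < L^2"
        using 3 zero_less_power[OF L, of 2] by linarith+
      then have "\<bar>P6_sq_d1 L s * s\<bar> = \<bar>L / sqrt s / 2\<bar>"
        by (simp only: P6_sq_d1_mult_self[OF L] if_False abs_minus_cancel)
      ultimately show ?thesis
        by (subst (asm) abs_of_nonneg) auto
    qed (use B in \<open>simp add: P6_sq_d1_mult_self[OF L]\<close>)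
  qed
  then show ?thesis
    by blast
qed

section \<open>The velocity limiting map\<close>

definition vlim :: "real \<Rightarrow> 'a::real_inner \<Rightarrow> 'a" where
  "vlim L v = P6_sq L (v \<bullet> v) *\<^sub>R v"

definition vlim_D1 :: "real \<Rightarrow> 'a::real_inner \<Rightarrow> 'a \<Rightarrow>\<^sub>L 'a" where
  "vlim_D1 L v = P6_sq L (v \<bullet> v) *\<^sub>R id_blinfun + (2 * P6_sq_d1 L (v \<bullet> v)) *\<^sub>R blinfun_outer v v"

text \<open>With \<open>p = P6_sq L\<close> and its derivatives taken at \<open>v \<bullet> v\<close>, \<open>vlim_D2 L v h k\<close> is
  \<open>2 p' ((h \<bullet> v) k + (k \<bullet> v) h + (k \<bullet> h) v) + 4 p'' (h \<bullet> v) (k \<bullet> v) v\<close>.\<close>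

definition vlim_D2 :: "real \<Rightarrow> 'a::real_inner \<Rightarrow> 'a \<Rightarrow>\<^sub>L 'a \<Rightarrow>\<^sub>L 'a" where
  "vlim_D2 L v =
     (2 * P6_sq_d1 L (v \<bullet> v)) *\<^sub>R
       (blinfun_outer id_blinfun v + bounded_bilinear.prod_left blinfun_outer v
        + bounded_bilinear.prod_right blinfun_outer v)
     + (4 * P6_sq_d2 L (v \<bullet> v)) *\<^sub>R blinfun_outer (blinfun_outer v v) v"

lemma has_derivative_vlim:
  assumes "L > 0"
  shows "(vlim L has_derivative blinfun_apply (vlim_D1 L v)) (at v)"
  unfolding vlim_def[abs_def]
  by (rule has_derivative_eq_rhs[OF has_derivative_scaleR[OF
        DERIV_compose_FDERIV[OF DERIV_P6_sq[OF assms] has_derivative_inner_self] has_derivative_ident]])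
    (simp add: vlim_D1_def blinfun.bilinear_simps inner_commute fun_eq_iff)

lemma has_derivative_vlim_D1:
  assumes "L > 0"
  shows "(vlim_D1 L has_derivative blinfun_apply (vlim_D2 L v)) (at v)"
proof -
  have "((\<lambda>v. P6_sq L (v \<bullet> v) *\<^sub>R (id_blinfun :: 'a \<Rightarrow>\<^sub>L 'a)) has_derivative
      (\<lambda>h. (2 * (v \<bullet> h) * P6_sq_d1 L (v \<bullet> v)) *\<^sub>R id_blinfun)) (at v)"
    by (rule has_derivative_eq_rhs[OF has_derivative_scaleR[OF
          DERIV_compose_FDERIV[OF DERIV_P6_sq[OF assms] has_derivative_inner_self] has_derivative_const]])
      simp
  moreover have "((\<lambda>v. (2 * P6_sq_d1 L (v \<bullet> v)) *\<^sub>R blinfun_outer v v) has_derivative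
      (\<lambda>h. (2 * P6_sq_d1 L (v \<bullet> v)) *\<^sub>R (blinfun_outer v h + blinfun_outer h v)
        + (2 * (2 * (v \<bullet> h) * P6_sq_d2 L (v \<bullet> v))) *\<^sub>R blinfun_outer v v)) (at v)"
    by (rule has_derivative_scaleR[OF has_derivative_mult_right[OF
          DERIV_compose_FDERIV[OF DERIV_P6_sq_d1[OF assms] has_derivative_inner_self]]
          bounded_bilinear.FDERIV[OF bounded_bilinear_blinfun_outer has_derivative_ident has_derivative_ident]])
  ultimately show ?thesis
    unfolding vlim_D1_def[abs_def]
    by (rule has_derivative_eq_rhs[OF has_derivative_add])
      (intro ext blinfun_eqI; simp add: vlim_D2_def blinfun.bilinear_simps inner_commute algebra_simps)
qed

lemma lipschitz_on_ball_comp_inner_self: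
  assumes "\<And>a b. \<exists>C. C-lipschitz_on {a..b} g"
  shows "\<exists>C. C-lipschitz_on (ball v0 r) (\<lambda>v::'a::real_inner. g (v \<bullet> v))"
proof -
  define R where "R = (norm v0 + r)^2"
  have img: "(\<lambda>v. v \<bullet> v) ` ball v0 r \<subseteq> {0..R}"
  proof clarify
    fix v assume "v \<in> ball v0 r"
    then have "norm v \<le> norm v0 + r" "0 \<le> norm v"
      using norm_triangle_sub[of v v0] by (auto simp: dist_norm norm_minus_commute)
    then show "v \<bullet> v \<in> {0..R}"
      unfolding R_def by (simp add: power_mono flip: power2_norm_eq_inner)
  qed
  obtain Cs where "Cs-lipschitz_on (ball v0 r) (\<lambda>v. v \<bullet> v)"
    using bounded_bilinear.lipschitz_on_bounded[OF bounded_bilinear_inner bounded_ball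
        lipschitz_on_id lipschitz_on_id]
    by blast
  moreover obtain Cg where "Cg-lipschitz_on {0..R} g"
    using assms by blast
  ultimately have "(Cg * Cs)-lipschitz_on (ball v0 r) (\<lambda>v. g (v \<bullet> v))"
    by (intro lipschitz_on_compose2 lipschitz_on_subset[OF _ img])
  then show ?thesis ..
qed

lemma vlim_D2_lipschitz_on_ball:
  assumes L: "L > 0"
  shows "\<exists>C. C-lipschitz_on (ball v0 r) (vlim_D2 L :: 'a::real_inner \<Rightarrow> _)"
proof -
  let ?U = "ball v0 r"
  obtain C1 C2 where
    "C1-lipschitz_on ?U (\<lambda>v::'a. P6_sq_d1 L (v \<bullet> v))" "C2-lipschitz_on ?U (\<lambda>v::'a. P6_sq_d2 L (v \<bullet> v))"
    using lipschitz_on_ball_comp_inner_self P6_sq_d1_lipschitz[OF L] P6_sq_d2_lipschitz[OF L] by metis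
  then have f1: "(\<bar>2\<bar> * C1)-lipschitz_on ?U (\<lambda>v::'a. 2 * P6_sq_d1 L (v \<bullet> v))"
    and f2: "(\<bar>4\<bar> * C2)-lipschitz_on ?U (\<lambda>v::'a. 4 * P6_sq_d2 L (v \<bullet> v))"
    by (simp_all only: lipschitz_on_cmult_real)
  have "bounded_linear (\<lambda>v::'a. blinfun_outer id_blinfun v + bounded_bilinear.prod_left blinfun_outer v
      + bounded_bilinear.prod_right blinfun_outer v)"
    by (intro bounded_linear_add bounded_bilinear.bounded_linear_right bounded_bilinear_blinfun_outer
        bounded_bilinear.bounded_linear_prod_left bounded_bilinear.bounded_linear_prod_right)
  then obtain B1 where B1: "B1-lipschitz_on ?U (\<lambda>v::'a. blinfun_outer id_blinfun v
      + bounded_bilinear.prod_left blinfun_outer v + bounded_bilinear.prod_right blinfun_outer v)"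
    by (rule bounded_linear.lipschitz_boundE)
  obtain B0 where "B0-lipschitz_on ?U (\<lambda>v::'a. blinfun_outer v v)"
    using bounded_bilinear.lipschitz_on_bounded[OF bounded_bilinear_blinfun_outer bounded_ball
        lipschitz_on_id lipschitz_on_id]
    by blast
  then obtain B2 where B2: "B2-lipschitz_on ?U (\<lambda>v::'a. blinfun_outer (blinfun_outer v v) v)"
    using bounded_bilinear.lipschitz_on_bounded[OF bounded_bilinear_blinfun_outer bounded_ball _ lipschitz_on_id]
    by blast
  obtain T1 T2 where
    "T1-lipschitz_on ?U (\<lambda>v. (2 * P6_sq_d1 L (v \<bullet> v)) *\<^sub>R (blinfun_outer id_blinfun v
        + bounded_bilinear.prod_left blinfun_outer v + bounded_bilinear.prod_right blinfun_outer v))"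
    "T2-lipschitz_on ?U (\<lambda>v. (4 * P6_sq_d2 L (v \<bullet> v)) *\<^sub>R blinfun_outer (blinfun_outer v v) v)"
    using bounded_bilinear.lipschitz_on_bounded[OF bounded_bilinear_scaleR bounded_ball f1 B1]
      bounded_bilinear.lipschitz_on_bounded[OF bounded_bilinear_scaleR bounded_ball f2 B2]
    by blast
  then have "(T1 + T2)-lipschitz_on ?U (vlim_D2 L)"
    unfolding vlim_D2_def[abs_def] by (rule lipschitz_on_add)
  then show ?thesis ..
qed

lemma C21_loc_vlim:
  assumes "L > 0"
  shows "C21_loc (vlim L :: 'a::real_inner \<Rightarrow> 'a)"
  unfolding C21_loc_def
  using has_derivative_vlim[OF assms] has_derivative_vlim_D1[OF assms] vlim_D2_lipschitz_on_ball[OF assms]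
  by (metis centre_in_ball open_ball zero_less_one)

lemma vlim_D1_bounded: "\<exists>K. \<forall>L > 0. \<forall>v :: 'a::real_inner. norm (vlim_D1 L v) \<le> K"
proof -
  obtain B where B: "\<And>L s. L > 0 \<Longrightarrow> \<bar>P6_sq_d1 L s * s\<bar> \<le> B"
    using P6_sq_d1_mult_self_bounded by blast
  have "norm (vlim_D1 L v) \<le> 2 + 2 * B" if L: "L > 0" for L and v :: 'a
  proof (rule norm_blinfun_bound)
    show "0 \<le> 2 + 2 * B"
      using B[OF L, of 0] by simp
    fix h :: 'a
    let ?p = "P6_sq L (v \<bullet> v)" and ?q = "P6_sq_d1 L (v \<bullet> v)"
    have "\<bar>?p\<bar> * norm h \<le> 2 * norm h"
      using P6_bounds(1,2)[OF L] by (simp add: P6_sq_def mult_right_mono)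
    have "\<bar>h \<bullet> v\<bar> * norm v \<le> norm h * (v \<bullet> v)"
      using mult_right_mono[OF Cauchy_Schwarz_ineq2[of h v] norm_ge_zero[of v]]
      by (simp add: power2_eq_square mult.assoc flip: power2_norm_eq_inner)
    then have "norm ((2 * ?q * (h \<bullet> v)) *\<^sub>R v) \<le> 2 * \<bar>?q\<bar> * (norm h * (v \<bullet> v))"
      by (simp add: abs_mult mult_left_mono mult.assoc)
    also have "\<dots> = 2 * \<bar>?q * (v \<bullet> v)\<bar> * norm h"
      by (simp add: abs_mult mult_ac)
    also have "\<dots> \<le> 2 * B * norm h"
      using B[OF L] by (simp add: mult_right_mono)
    finally have "norm ((2 * ?q * (h \<bullet> v)) *\<^sub>R v) \<le> 2 * B * norm h" .
    moreover have "vlim_D1 L v h = ?p *\<^sub>R h + (2 * ?q * (h \<bullet> v)) *\<^sub>R v"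
      by (simp add: vlim_D1_def blinfun.bilinear_simps)
    ultimately show "norm (vlim_D1 L v h) \<le> (2 + 2 * B) * norm h"
      using norm_triangle_ineq[of "?p *\<^sub>R h" "(2 * ?q * (h \<bullet> v)) *\<^sub>R v"] \<open>\<bar>?p\<bar> * norm h \<le> 2 * norm h\<close>
      by (simp add: algebra_simps)
  qed
  then show ?thesis
    by blast
qed

lemma thbar_eq_vlim: "thbar L \<delta> th thp = vlim L (thdot \<delta> th thp)"
  unfolding thbar_def vlim_def P6_sq_def by (simp flip: norm_eq_sqrt_inner)

lemma norm_thbar_le:
  assumes "L > 0"
  shows "norm (thbar L \<delta> th thp) \<le> L"
  using P6_bounds(1,3)[OF assms, of "norm (thdot \<delta> th thp)"] by (simp add: thbar_def)

lemma thbar_eq_thdot: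
  assumes "L > 0" "norm (thdot \<delta> th thp) \<le> L / 2"
  shows "thbar L \<delta> th thp = thdot \<delta> th thp"
  using P6_eq_1[OF assms] by (simp add: thbar_def)

lemma has_derivative_thbar:
  assumes "L > 0"
  shows "((\<lambda>x. thbar L \<delta> x thp) has_derivative
          blinfun_apply ((1 / \<delta>) *\<^sub>R vlim_D1 L (thdot \<delta> th thp))) (at th)"
    and "((\<lambda>y. thbar L \<delta> th y) has_derivative
          blinfun_apply (- (1 / \<delta>) *\<^sub>R vlim_D1 L (thdot \<delta> th thp))) (at thp)"
  unfolding thbar_eq_vlim thdot_def
  by (rule has_derivative_eq_rhs[OF has_derivative_compose[OF _ has_derivative_vlim[OF assms]]],
      auto intro!: derivative_eq_intros
        simp: fun_eq_iff blinfun.scaleR_left blinfun.scaleR_right blinfun.minus_left blinfun.minus_right)+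

theorem corollary13:
  fixes \<nu> er L2 :: real and A :: "real^'n^3"
  assumes "\<nu> > 0" and "er > 0" and "L2 > 0"
  shows
   "(\<forall>\<delta> L17. \<delta> > 0 \<longrightarrow> L17 > 0 \<longrightarrow>
       (\<exists>(D1 :: (real^'n) \<times> (real^'n) \<Rightarrow> ((real^'n) \<times> (real^'n)) \<Rightarrow>\<^sub>L (real^'n))
           (D2 :: (real^'n) \<times> (real^'n) \<Rightarrow> ((real^'n) \<times> (real^'n)) \<Rightarrow>\<^sub>L (((real^'n) \<times> (real^'n)) \<Rightarrow>\<^sub>L (real^'n))).
          (\<forall>p. ((\<lambda>q. thbar L17 \<delta> (fst q) (snd q)) has_derivative blinfun_apply (D1 p)) (at p)) \<and>
          (\<forall>p. (D1 has_derivative blinfun_apply (D2 p)) (at p)) \<and>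
          (\<forall>p. \<exists>U. open U \<and> p \<in> U \<and> (\<exists>C. C-lipschitz_on U D2))))
    \<and> (\<forall>\<delta> L17 (th :: real^'n) thp. \<delta> > 0 \<longrightarrow> L17 > 0 \<longrightarrow>
         norm (thbar L17 \<delta> th thp) \<le> L17)
    \<and> (\<forall>\<delta> L17 (th :: real^'n) thp. \<delta> > 0 \<longrightarrow> L17 > 0 \<longrightarrow>
         norm (thdot \<delta> th thp) \<le> L17 / 2 \<longrightarrow>
         thbar L17 \<delta> th thp = thdot \<delta> th thp \<and>
         ffric \<nu> er L2 A th (thdot \<delta> th thp) = ffric \<nu> er L2 A th (thbar L17 \<delta> th thp))
    \<and> (\<exists>L18. \<forall>\<delta> L17 (th :: real^'n) thp. \<delta> > 0 \<longrightarrow> L17 > 0 \<longrightarrow>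
         (\<exists>Da Db.
            ((\<lambda>x. thbar L17 \<delta> x thp) has_derivative Da) (at th) \<and> onorm Da \<le> L18 / \<delta> \<and>
            ((\<lambda>y. thbar L17 \<delta> th y) has_derivative Db) (at thp) \<and> onorm Db \<le> L18 / \<delta>))"
proof -
  have C21: "C21_loc (\<lambda>q. thbar L \<delta> (fst q) (snd q) :: real^'n)" if "L > 0" for \<delta> L
  proof -
    have "(\<lambda>q. thbar L \<delta> (fst q) (snd q) :: real^'n)
        = (\<lambda>q. vlim L (((1 / \<delta>) *\<^sub>R (fst_blinfun - snd_blinfun)) q))"
      by (simp add: fun_eq_iff thbar_eq_vlim thdot_def blinfun.bilinear_simps)
    then show ?thesis
      using C21_loc_compose_blinfun[OF C21_loc_vlim[OF that]] by simp
  qed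
  obtain K where K: "\<And>L v. L > 0 \<Longrightarrow> norm (vlim_D1 L (v :: real^'n)) \<le> K"
    using vlim_D1_bounded by blast
  have onorm_le: "onorm (blinfun_apply (c *\<^sub>R vlim_D1 L v)) \<le> K / \<delta>"
    if "\<bar>c\<bar> = 1 / \<delta>" "\<delta> > 0" "L > 0" for c \<delta> L and v :: "real^'n"
    using K[OF \<open>L > 0\<close>, of v] that by (simp add: norm_blinfun.rep_eq[symmetric] divide_right_mono)
  have partials: "\<exists>Da Db.
      ((\<lambda>x. thbar L \<delta> x thp) has_derivative Da) (at th) \<and> onorm Da \<le> K / \<delta> \<and>
      ((\<lambda>y. thbar L \<delta> th y) has_derivative Db) (at thp) \<and> onorm Db \<le> K / \<delta>"
    if "\<delta> > 0" "L > 0" for \<delta> L and th thp :: "real^'n"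
    using has_derivative_thbar[OF \<open>L > 0\<close>] onorm_le[of "1 / \<delta>" \<delta> L] onorm_le[of "- (1 / \<delta>)" \<delta> L] that
    by (intro exI conjI) auto
  show ?thesis
    by (intro conjI allI impI exI[of _ K] C21[unfolded C21_loc_def] partials norm_thbar_le)
      (simp_all add: thbar_eq_thdot)
qed

end
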